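(* Let $d\ge 2$, let $B$ be a ball of radius $r\in(0,\pi/2)$ in $\mathbb{S}^d$, and let $S_{\mathrm{reg}}$ be a regular simplex circumscribed about $B$. (i) For every $d\ge3$, if $r$ is sufficiently close to $\pi/2$, then there is a spherical simplex $S$ containing $B$ with $\mathrm{vol}_1(\mathrm{skel}_1(S))<\mathrm{vol}_1(\mathrm{skel}_1(S_{\mathrm{reg}}))$. (ii) For every $r\in(0,\pi/2)$, if $d$ is sufficiently large, then there is a spherical simplex $S$ containing $B$ with $\mathrm{vol}_1(\mathrm{skel}_1(S))<\mathrm{vol}_1(\mathrm{skel}_1(S_{\mathrm{reg}}))$.
   Context: A spherical simplex is the spherical convex hull of $d+1$ points in an open hemisphere of $\mathbb{S}^d$ not on a common great subsphere; it is regular if all its edges have equal length, and circumscribed about $B$ if it contains $B$ and all its facets touch $B$. $\mathrm{vol}_1(\mathrm{skel}_1(S))$ is the total edge length of $S$ (sum of the spherical lengths of its edges). *)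

theory Defs
  imports Complex_Main
begin

text \<open>Points of R^(d+1) are represented as functions nat => real supported on {0..d}.
  This explicit carrier is needed because the dimension d varies within the statement.\<close>

definition ipr :: "nat \<Rightarrow> (nat \<Rightarrow> real) \<Rightarrow> (nat \<Rightarrow> real) \<Rightarrow> real" where
  "ipr d x y = (\<Sum>i\<le>d. x i * y i)"

definition vecR :: "nat \<Rightarrow> (nat \<Rightarrow> real) set" where
  "vecR d = {x. \<forall>i>d. x i = 0}"

definition sph :: "nat \<Rightarrow> (nat \<Rightarrow> real) set" where
  "sph d = {x \<in> vecR d. ipr d x x = 1}"

definition sdist :: "nat \<Rightarrow> (nat \<Rightarrow> real) \<Rightarrow> (nat \<Rightarrow> real) \<Rightarrow> real" where
  "sdist d x y = arccos (ipr d x y)"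

definition sball :: "nat \<Rightarrow> (nat \<Rightarrow> real) \<Rightarrow> real \<Rightarrow> (nat \<Rightarrow> real) set" where
  "sball d c r = {x \<in> sph d. sdist d x c \<le> r}"

definition shull :: "nat \<Rightarrow> nat set \<Rightarrow> (nat \<Rightarrow> nat \<Rightarrow> real) \<Rightarrow> (nat \<Rightarrow> real) set" where
  "shull d I v = {x \<in> sph d. \<exists>l. (\<forall>i\<in>I. l i \<ge> 0) \<and> x = (\<lambda>k. \<Sum>i\<in>I. l i * v i k)}"

text \<open>v 0, ..., v d are the vertices of a spherical simplex in S^d: points of S^d in an
  open hemisphere, not on a common great subsphere (i.e. linearly independent in R^(d+1)).\<close>
definition is_ssimplex :: "nat \<Rightarrow> (nat \<Rightarrow> nat \<Rightarrow> real) \<Rightarrow> bool" where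
  "is_ssimplex d v \<longleftrightarrow>
     (\<forall>i\<le>d. v i \<in> sph d) \<and>
     (\<exists>u \<in> vecR d. \<forall>i\<le>d. ipr d u (v i) > 0) \<and>
     (\<forall>a. (\<forall>k\<le>d. (\<Sum>i\<le>d. a i * v i k) = 0) \<longrightarrow> (\<forall>i\<le>d. a i = 0))"

definition ssimplex_set :: "nat \<Rightarrow> (nat \<Rightarrow> nat \<Rightarrow> real) \<Rightarrow> (nat \<Rightarrow> real) set" where
  "ssimplex_set d v = shull d {..d} v"

definition sfacet :: "nat \<Rightarrow> (nat \<Rightarrow> nat \<Rightarrow> real) \<Rightarrow> nat \<Rightarrow> (nat \<Rightarrow> real) set" where
  "sfacet d v j = shull d ({..d} - {j}) v"

definition is_regular :: "nat \<Rightarrow> (nat \<Rightarrow> nat \<Rightarrow> real) \<Rightarrow> bool" where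
  "is_regular d v \<longleftrightarrow> (\<forall>i\<le>d. \<forall>j\<le>d. \<forall>k\<le>d. \<forall>l\<le>d.
      i \<noteq> j \<longrightarrow> k \<noteq> l \<longrightarrow> sdist d (v i) (v j) = sdist d (v k) (v l))"

definition circumscribed :: "nat \<Rightarrow> (nat \<Rightarrow> nat \<Rightarrow> real) \<Rightarrow> (nat \<Rightarrow> real) set \<Rightarrow> bool" where
  "circumscribed d v B \<longleftrightarrow> B \<subseteq> ssimplex_set d v \<and> (\<forall>j\<le>d. sfacet d v j \<inter> B \<noteq> {})"

definition edge_length :: "nat \<Rightarrow> (nat \<Rightarrow> nat \<Rightarrow> real) \<Rightarrow> real" where
  "edge_length d v = (\<Sum>j\<le>d. \<Sum>i<j. sdist d (v i) (v j))"

end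

theory Submission
  imports Defs
begin

text \<open>If the ball of radius \<open>r\<close> lies in a regular simplex with vertex Gram matrix
  \<open>(1 - t) I + t J\<close> and \<open>(d + 1) sin\<^sup>2 r > 1\<close>, comparing the facet normals with the ball
  forces \<open>t < 0\<close>: all edges are longer than \<open>\<pi>/2\<close>, so the total edge length exceeds
  \<open>d(d + 1)\<pi>/4 \<ge> d\<pi>\<close> once \<open>d \<ge> 3\<close>. A larger simplex that keeps one vertex \<open>v\<^sub>0\<close> and moves
  the others close to \<open>-v\<^sub>0\<close> has \<open>d\<close> edges of length at most \<open>\<pi>\<close> and all others arbitrarily
  short, hence a total edge length arbitrarily close to \<open>d\<pi>\<close>. Both regimes of the theorem
  (\<open>r\<close> near \<open>\<pi>/2\<close>, or \<open>d\<close> large) guarantee \<open>(d + 1) sin\<^sup>2 r > 1\<close>.\<close>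

lemma ipr_commute: "ipr d x y = ipr d y x"
  unfolding ipr_def by (simp add: mult.commute)

lemma ipr_linear_left: "ipr d (\<lambda>k. a * x k + b * y k) z = a * ipr d x z + b * ipr d y z"
  unfolding ipr_def by (simp add: algebra_simps sum.distrib sum_distrib_left)

lemma ipr_linear_right: "ipr d z (\<lambda>k. a * x k + b * y k) = a * ipr d z x + b * ipr d z y"
  using ipr_linear_left[of d a x b y z] by (simp add: ipr_commute)

lemma ipr_sum_left: "ipr d (\<lambda>k. \<Sum>i\<in>I. f i * v i k) z = (\<Sum>i\<in>I. f i * ipr d (v i) z)"
  unfolding ipr_def by (simp add: sum_distrib_left sum_distrib_right mult.assoc sum.swap[of _ I])

lemma ipr_sum_right: "ipr d z (\<lambda>k. \<Sum>i\<in>I. f i * v i k) = (\<Sum>i\<in>I. f i * ipr d z (v i))"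
  using ipr_sum_left[of d f v I z] by (simp add: ipr_commute)

lemma ipr_self_nonneg: "ipr d x x \<ge> 0"
  unfolding ipr_def by (simp add: sum_nonneg)

lemma ipr_self_eq_0_imp_zero:
  assumes "ipr d x x = 0" "k \<le> d"
  shows "x k = 0"
proof -
  have "\<forall>i\<in>{..d}. x i * x i = 0"
    using assms(1) unfolding ipr_def by (subst sum_nonneg_eq_0_iff[symmetric]) auto
  then show ?thesis using assms(2) by auto
qed

lemma ipr_square_le_unit:
  assumes "ipr d c c = 1"
  shows "(ipr d x c)^2 \<le> ipr d x x"
  using ipr_self_nonneg[of d "\<lambda>k. 1 * x k + (- ipr d x c) * c k"] assms
  unfolding ipr_linear_left ipr_linear_right
  by (simp add: ipr_commute[of d c x] power2_eq_square algebra_simps)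

lemma ipr_unit_bounds:
  assumes "ipr d x x = 1" "ipr d y y = 1"
  shows "-1 \<le> ipr d x y" "ipr d x y \<le> 1"
  using ipr_square_le_unit[OF assms(2), of x] assms(1) by (simp_all add: abs_square_le_1 abs_le_iff)

lemma sum_if_eq_atMost:
  assumes "j \<le> d"
  shows "(\<Sum>i\<le>d. if i = j then a else b) = a + real d * (b::real)"
proof -
  have "(\<Sum>i\<le>d. if i = j then a else b) = (\<Sum>i\<le>d. b + (if i = j then a - b else 0))"
    by (rule sum.cong) auto
  also have "\<dots> = (real d + 1) * b + (a - b)" using assms by (simp add: sum.distrib)
  finally show ?thesis by (simp add: algebra_simps)
qed

lemma sball_boundary_point:
  assumes c: "c \<in> sph d" and p: "p \<in> vecR d" "ipr d c p = 0" "ipr d p p > 0"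
    and r: "0 \<le> r" "r \<le> pi"
  shows "(\<lambda>k. cos r * c k + (- sin r / sqrt (ipr d p p)) * p k) \<in> sball d c r"
proof -
  let ?x = "\<lambda>k. cos r * c k + (- sin r / sqrt (ipr d p p)) * p k"
  have cc: "ipr d c c = 1" and cV: "c \<in> vecR d" using c unfolding sph_def by auto
  have "ipr d ?x ?x = 1" unfolding ipr_linear_left ipr_linear_right using p(2,3) cc
    by (simp add: ipr_commute[of d p c] power2_eq_square[symmetric] sin_squared_eq)
  moreover have "?x \<in> vecR d" using cV p(1) unfolding vecR_def by auto
  moreover have "ipr d ?x c = cos r"
    unfolding ipr_linear_left using cc p(2) by (simp add: ipr_commute[of d p c])
  ultimately show ?thesis using r unfolding sball_def sph_def sdist_def by (simp add: arccos_cos)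
qed

text \<open>A closed half-space \<open>\<langle>m, x\<rangle> \<ge> 0\<close> containing the ball of radius \<open>r\<close> about \<open>c\<close>
  contains its boundary point \<open>cos r \<cdot> c - sin r \<cdot> p/|p|\<close>, where \<open>p\<close> is the component of \<open>m\<close>
  orthogonal to \<open>c\<close>.\<close>
lemma sball_subset_halfspace_imp:
  assumes c: "c \<in> sph d" and m: "m \<in> vecR d" and r: "0 < r" "r < pi/2"
    and halfspace: "\<And>x. x \<in> sball d c r \<Longrightarrow> ipr d m x \<ge> 0"
  shows "ipr d m c \<ge> sin r * sqrt (ipr d m m)"
proof -
  define a where "a = ipr d m c"
  define q where "q = ipr d m m - a^2"
  define p where "p = (\<lambda>k. 1 * m k + (-a) * c k)"
  have cc: "ipr d c c = 1" and cV: "c \<in> vecR d" using c unfolding sph_def by auto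
  have "c \<in> sball d c r" using c r unfolding sball_def sdist_def by (simp add: cc)
  then have a0: "a \<ge> 0" using halfspace a_def by auto
  have mc: "ipr d c m = a" using a_def ipr_commute by metis
  have pm: "ipr d m p = q" unfolding p_def ipr_linear_right q_def a_def by (simp add: power2_eq_square)
  have pc: "ipr d c p = 0" unfolding p_def ipr_linear_right using mc cc by simp
  have pp: "ipr d p p = q" unfolding p_def ipr_linear_left ipr_linear_right using pm pc mc cc
    by (simp add: ipr_commute[of d c m] a_def q_def power2_eq_square algebra_simps)
  have q0: "q \<ge> 0" using pp ipr_self_nonneg by metis
  have sr: "0 \<le> sin r" "sin r \<le> 1" using r by (auto intro: sin_ge_zero)
  have key: "(sin r)^2 * (q + a^2) \<le> a^2"
  proof (cases "q = 0")
    case True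
    then show ?thesis using sr by (simp add: mult_left_le_one_le power_le_one)
  next
    case False
    then have qp: "q > 0" using q0 by auto
    define x where "x = (\<lambda>k. cos r * c k + (- sin r / sqrt q) * p k)"
    have "p \<in> vecR d" using cV m unfolding p_def vecR_def by auto
    moreover have "0 \<le> r" "r \<le> pi" using r pi_gt_zero by linarith+
    ultimately have "x \<in> sball d c r"
      using sball_boundary_point[OF c _ pc] pp qp unfolding x_def by simp
    then have "ipr d m x \<ge> 0" using halfspace by auto
    moreover have "ipr d m x = cos r * a - sin r * sqrt q"
      unfolding x_def ipr_linear_right using pm qp
      by (simp add: a_def real_div_sqrt flip: times_divide_eq_right)
    ultimately have "sin r * sqrt q \<le> a * cos r" by (simp add: mult.commute)
    then have "(sin r * sqrt q)^2 \<le> (a * cos r)^2" using sr qp by (intro power_mono) auto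
    then have "(sin r)^2 * q \<le> a^2 * (cos r)^2" using qp by (simp add: power_mult_distrib)
    then show ?thesis using cos_squared_eq[of r] by (simp add: algebra_simps)
  qed
  have "sin r * sqrt (ipr d m m) = sqrt ((sin r)^2 * (q + a^2))"
    using sr by (simp add: q_def real_sqrt_mult)
  also have "\<dots> \<le> sqrt (a^2)" using key by (rule real_sqrt_le_mono)
  also have "\<dots> = a" using a0 by simp
  finally show ?thesis using a_def by simp
qed

lemma ssimplex_vertex: "is_ssimplex d v \<Longrightarrow> i \<le> d \<Longrightarrow> ipr d (v i) (v i) = 1 \<and> v i \<in> vecR d"
  unfolding is_ssimplex_def sph_def by auto

lemma ssimplex_vertex_vanishes: "is_ssimplex d v \<Longrightarrow> i \<le> d \<Longrightarrow> d < k \<Longrightarrow> v i k = 0"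
  using ssimplex_vertex unfolding vecR_def by blast

lemma ssimplex_independent:
  "is_ssimplex d v \<Longrightarrow> (\<And>k. k \<le> d \<Longrightarrow> (\<Sum>i\<le>d. a i * v i k) = 0) \<Longrightarrow> i \<le> d \<Longrightarrow> a i = 0"
  unfolding is_ssimplex_def by blast

definition equiangular :: "nat \<Rightarrow> (nat \<Rightarrow> nat \<Rightarrow> real) \<Rightarrow> real \<Rightarrow> bool" where
  "equiangular d v t \<longleftrightarrow> (\<forall>i\<le>d. \<forall>j\<le>d. ipr d (v i) (v j) = (if i = j then 1 else t))"

definition vertex_sum :: "nat \<Rightarrow> (nat \<Rightarrow> nat \<Rightarrow> real) \<Rightarrow> nat \<Rightarrow> real" where
  "vertex_sum d v = (\<lambda>k. \<Sum>i\<le>d. v i k)"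

lemma ipr_vertex_sum_left: "ipr d (vertex_sum d v) z = (\<Sum>i\<le>d. ipr d (v i) z)"
  using ipr_sum_left[of d "\<lambda>_. 1" v "{..d}" z] by (simp add: vertex_sum_def)

lemma ipr_vertex_sum_right: "ipr d z (vertex_sum d v) = (\<Sum>i\<le>d. ipr d z (v i))"
  using ipr_vertex_sum_left[of d v z] by (simp add: ipr_commute)

lemma equiangular_ipr_vertex_sum:
  assumes "equiangular d v t" "j \<le> d"
  shows "ipr d (vertex_sum d v) (v j) = 1 + real d * t"
proof -
  have "ipr d (vertex_sum d v) (v j) = (\<Sum>i\<le>d. if i = j then 1 else t)"
    unfolding ipr_vertex_sum_left using assms unfolding equiangular_def
    by (intro sum.cong) auto
  then show ?thesis using sum_if_eq_atMost[OF assms(2)] by simp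
qed

lemma equiangular_vertex_sum_norm:
  assumes "equiangular d v t"
  shows "ipr d (vertex_sum d v) (vertex_sum d v) = (real d + 1) * (1 + real d * t)"
proof -
  have "ipr d (vertex_sum d v) (vertex_sum d v) = (\<Sum>i\<le>d. 1 + real d * t)"
    unfolding ipr_vertex_sum_right by (intro sum.cong) (simp_all add: equiangular_ipr_vertex_sum[OF assms])
  then show ?thesis by simp
qed

text \<open>Both bounds express that the Gram matrix \<open>(1 - t) I + t J\<close> of linearly independent
  vectors is positive definite.\<close>
lemma equiangular_ssimplex_bounds:
  assumes d: "d \<ge> 1" and v: "is_ssimplex d v" and t: "equiangular d v t"
  shows "1 + real d * t > 0" "t < 1"
proof -
  let ?s = "vertex_sum d v"
  show "1 + real d * t > 0"
  proof (rule ccontr)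
    assume "\<not> ?thesis"
    then have "ipr d ?s ?s \<le> 0"
      using equiangular_vertex_sum_norm[OF t] by (simp add: mult_nonneg_nonpos)
    then have "ipr d ?s ?s = 0" using ipr_self_nonneg[of d ?s] by linarith
    then have "(\<Sum>i\<le>d. 1 * v i k) = 0" if "k \<le> d" for k
      using ipr_self_eq_0_imp_zero[OF _ that] by (simp add: vertex_sum_def)
    then show False using ssimplex_independent[OF v, of "\<lambda>_. 1" 0] by simp
  qed
  show "t < 1"
  proof (rule ccontr)
    assume "\<not> t < 1"
    define a where "a = (\<lambda>i::nat. if i = 0 then (1::real) else if i = 1 then -1 else 0)"
    define x where "x = (\<lambda>k. 1 * v 0 k + (-1) * v 1 k)"
    have "ipr d (v 0) (v 0) = 1" "ipr d (v 1) (v 1) = 1" "ipr d (v 0) (v 1) = t" "ipr d (v 1) (v 0) = t"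
      using t d unfolding equiangular_def by auto
    then have "ipr d x x = 2 - 2 * t"
      unfolding x_def ipr_linear_left ipr_linear_right by simp
    then have x0: "ipr d x x = 0" using ipr_self_nonneg[of d x] \<open>\<not> t < 1\<close> by linarith
    have "(\<Sum>i\<le>d. a i * v i k) = 0" if "k \<le> d" for k
    proof -
      have "(\<Sum>i\<le>d. a i * v i k) = (\<Sum>i\<le>d. (if i = 0 then v 0 k else 0) + (if i = 1 then - v 1 k else 0))"
        by (rule sum.cong) (auto simp: a_def)
      also have "\<dots> = x k" using d by (simp add: sum.distrib x_def)
      finally show ?thesis using ipr_self_eq_0_imp_zero[OF x0 that] by simp
    qed
    then have "a 0 = 0" using ssimplex_independent[OF v] by blast
    then show False by (simp add: a_def)
  qed
qed

lemma regular_ssimplex_equiangular: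
  assumes d: "d \<ge> 1" and v: "is_ssimplex d v" "is_regular d v"
  shows "equiangular d v (ipr d (v 0) (v 1))"
  unfolding equiangular_def
proof (intro allI impI)
  fix i j assume ij: "i \<le> d" "j \<le> d"
  have unit: "\<And>i. i \<le> d \<Longrightarrow> ipr d (v i) (v i) = 1" using ssimplex_vertex[OF v(1)] by blast
  show "ipr d (v i) (v j) = (if i = j then 1 else ipr d (v 0) (v 1))"
  proof (cases "i = j")
    case False
    then have "sdist d (v i) (v j) = sdist d (v 0) (v 1)"
      using v(2)[unfolded is_regular_def, rule_format, of i j 0 1] ij d by simp
    moreover have "\<bar>ipr d (v i) (v j)\<bar> \<le> 1"
      using ipr_unit_bounds[OF unit[OF ij(1)] unit[OF ij(2)]] by (simp add: abs_le_iff)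
    moreover have "\<bar>ipr d (v 0) (v 1)\<bar> \<le> 1"
      using ipr_unit_bounds[OF unit[of 0] unit[of 1]] d by (simp add: abs_le_iff)
    ultimately have "ipr d (v i) (v j) = ipr d (v 0) (v 1)"
      unfolding sdist_def using arccos_eq_iff by blast
    then show ?thesis using False by simp
  qed (use unit ij in simp)
qed

text \<open>The inward normal of the facet opposite \<open>v j\<close>; its inner product with \<open>v i\<close> is
  \<open>\<kappa> \<delta>\<^sub>i\<^sub>j\<close> with \<open>\<kappa> = (1 + d t)(1 - t)\<close>.\<close>
definition facet_normal :: "nat \<Rightarrow> (nat \<Rightarrow> nat \<Rightarrow> real) \<Rightarrow> real \<Rightarrow> nat \<Rightarrow> nat \<Rightarrow> real" where
  "facet_normal d v t j = (\<lambda>k. (1 + real d * t) * v j k + (- t) * vertex_sum d v k)"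

lemma ipr_facet_normal_vertex:
  assumes "equiangular d v t" "i \<le> d" "j \<le> d"
  shows "ipr d (facet_normal d v t j) (v i) = (if i = j then (1 + real d * t) * (1 - t) else 0)"
proof -
  have "ipr d (v j) (v i) = (if i = j then 1 else t)"
    using assms unfolding equiangular_def by auto
  moreover have "ipr d (vertex_sum d v) (v i) = 1 + real d * t"
    using equiangular_ipr_vertex_sum[OF assms(1,2)] .
  ultimately show ?thesis
    unfolding facet_normal_def ipr_linear_left by (simp add: algebra_simps)
qed

lemma ipr_facet_normal_combination:
  assumes "equiangular d v t" "j \<le> d"
  shows "ipr d (facet_normal d v t j) (\<lambda>k. \<Sum>i\<le>d. l i * v i k) = l j * ((1 + real d * t) * (1 - t))"
proof -
  have "ipr d (facet_normal d v t j) (\<lambda>k. \<Sum>i\<le>d. l i * v i k)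
      = (\<Sum>i\<le>d. if j = i then l j * ((1 + real d * t) * (1 - t)) else 0)"
    unfolding ipr_sum_right using assms by (intro sum.cong refl) (simp add: ipr_facet_normal_vertex)
  also have "\<dots> = l j * ((1 + real d * t) * (1 - t))" using assms(2) by simp
  finally show ?thesis .
qed

lemma facet_normal_norm:
  assumes "equiangular d v t" "j \<le> d"
  shows "ipr d (facet_normal d v t j) (facet_normal d v t j)
    = (1 + (real d - 1) * t) * ((1 + real d * t) * (1 - t))"
proof -
  let ?n = "facet_normal d v t j" and ?\<kappa> = "(1 + real d * t) * (1 - t)"
  have "ipr d ?n ?n = (1 + real d * t) * ipr d ?n (v j) + (- t) * ipr d ?n (vertex_sum d v)"
    by (subst (2) facet_normal_def) (rule ipr_linear_right)
  also have "\<dots> = (1 + real d * t) * ?\<kappa> - t * ?\<kappa>"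
    using ipr_facet_normal_vertex[OF assms(1,2,2)] ipr_facet_normal_combination[OF assms, of "\<lambda>_. 1"]
    by (simp add: vertex_sum_def)
  finally show ?thesis by (simp add: algebra_simps)
qed

lemma facet_normal_nonneg_on_simplex:
  assumes "equiangular d v t" "1 + real d * t > 0" "t < 1" "j \<le> d" "x \<in> ssimplex_set d v"
  shows "ipr d (facet_normal d v t j) x \<ge> 0"
proof -
  obtain l where l: "\<And>i. i \<le> d \<Longrightarrow> l i \<ge> 0" "x = (\<lambda>k. \<Sum>i\<le>d. l i * v i k)"
    using assms(5) unfolding ssimplex_set_def shull_def by auto
  then have "ipr d (facet_normal d v t j) x = l j * ((1 + real d * t) * (1 - t))"
    using ipr_facet_normal_combination[OF assms(1,4)] by simp
  moreover have "l j \<ge> 0" using l(1) assms(4) .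
  ultimately show ?thesis using assms(2,3) by simp
qed

lemma sum_ipr_facet_normal:
  "(\<Sum>j\<le>d. ipr d (facet_normal d v t j) c) = (1 - t) * ipr d (vertex_sum d v) c"
  unfolding facet_normal_def ipr_linear_left ipr_vertex_sum_left
  by (simp add: sum.distrib sum_subtractf sum_distrib_left[symmetric] algebra_simps)

lemma facet_normal_in_vecR:
  assumes "is_ssimplex d v" "j \<le> d"
  shows "facet_normal d v t j \<in> vecR d"
  using assms ssimplex_vertex_vanishes[OF assms(1)]
  unfolding facet_normal_def vertex_sum_def vecR_def by auto

text \<open>Sum \<open>\<langle>n\<^sub>j, c\<rangle> \<ge> sin r \<cdot> |n\<^sub>j|\<close> over the facet normals and compare with
  \<open>\<Sum>\<^sub>j n\<^sub>j = (1 - t) s\<close>, \<open>|s|\<^sup>2 = (d + 1)(1 + d t)\<close>.\<close>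
lemma equiangular_ssimplex_containing_ball:
  assumes d: "d \<ge> 1" and v: "is_ssimplex d v" and t: "equiangular d v t"
    and c: "c \<in> sph d" and r: "0 < r" "r < pi/2" and sub: "sball d c r \<subseteq> ssimplex_set d v"
  shows "(real d + 1) * (sin r)^2 * (1 + (real d - 1) * t) \<le> 1 - t"
proof -
  let ?s = "vertex_sum d v"
  have pos: "1 + real d * t > 0" and t1: "t < 1" using equiangular_ssimplex_bounds[OF d v t] by auto
  have "1 + (real d - 1) * t \<ge> 0"
  proof (cases "t \<ge> 0")
    case True then show ?thesis using d by simp
  next
    case False then show ?thesis using pos by (simp add: algebra_simps)
  qed
  define N where "N = (1 + (real d - 1) * t) * ((1 + real d * t) * (1 - t))"
  have N0: "N \<ge> 0" unfolding N_def using \<open>1 + (real d - 1) * t \<ge> 0\<close> t1 pos by simp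
  have sin_r: "sin r \<ge> 0" using r by (auto intro: sin_ge_zero)
  have normal: "sin r * sqrt N \<le> ipr d (facet_normal d v t j) c" if "j \<le> d" for j
  proof -
    have "sin r * sqrt (ipr d (facet_normal d v t j) (facet_normal d v t j))
        \<le> ipr d (facet_normal d v t j) c"
      using sball_subset_halfspace_imp[OF c facet_normal_in_vecR[OF v that] r]
        facet_normal_nonneg_on_simplex[OF t pos t1 that] sub by blast
    then show ?thesis using facet_normal_norm[OF t that] unfolding N_def by simp
  qed
  have "(\<Sum>j\<le>d. sin r * sqrt N) \<le> (\<Sum>j\<le>d. ipr d (facet_normal d v t j) c)"
    by (rule sum_mono) (simp add: normal)
  then have "(real d + 1) * (sin r * sqrt N) \<le> (1 - t) * ipr d ?s c"
    by (simp add: sum_ipr_facet_normal add.commute)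
  then have "((real d + 1) * (sin r * sqrt N))^2 \<le> ((1 - t) * ipr d ?s c)^2"
    using sin_r N0 by (intro power_mono) auto
  also have "\<dots> \<le> (1 - t)^2 * ipr d ?s ?s"
    using ipr_square_le_unit[of d c ?s] c t1 unfolding sph_def
    by (simp add: power_mult_distrib mult_left_mono)
  finally have "(real d + 1)^2 * (sin r)^2 * N \<le> (1 - t)^2 * ((real d + 1) * (1 + real d * t))"
    using N0 equiangular_vertex_sum_norm[OF t] by (simp add: power_mult_distrib)
  moreover have "(real d + 1)^2 * (sin r)^2 * N
      = ((real d + 1) * (sin r)^2 * (1 + (real d - 1) * t)) * ((real d + 1) * (1 + real d * t) * (1 - t))"
    "(1 - t)^2 * ((real d + 1) * (1 + real d * t)) = (1 - t) * ((real d + 1) * (1 + real d * t) * (1 - t))"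
    unfolding N_def power2_eq_square by (simp_all add: mult_ac)
  moreover have "(real d + 1) * (1 + real d * t) * (1 - t) > 0" using pos t1 by simp
  ultimately show ?thesis by (metis mult_le_cancel_right_pos)
qed

lemma equiangular_ssimplex_containing_ball_obtuse:
  assumes d: "d \<ge> 1" and v: "is_ssimplex d v" and t: "equiangular d v t"
    and c: "c \<in> sph d" and r: "0 < r" "r < pi/2"
    and sub: "sball d c r \<subseteq> ssimplex_set d v" and big: "(real d + 1) * (sin r)^2 > 1"
  shows "t < 0"
proof (rule ccontr)
  assume "\<not> t < 0"
  then have "(real d + 1) * (sin r)^2 \<le> (real d + 1) * (sin r)^2 * (1 + (real d - 1) * t)"
    using d by (intro mult_le_cancel_left1[THEN iffD2]) (simp add: mult_less_0_iff)
  then show False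
    using equiangular_ssimplex_containing_ball[OF d v t c r sub] big \<open>\<not> t < 0\<close> by linarith
qed

lemma equiangular_edge_length:
  assumes "equiangular d v t"
  shows "edge_length d v = real d * (real d + 1) / 2 * arccos t"
proof -
  have "edge_length d v = (\<Sum>j\<le>d. \<Sum>i<j. arccos t)"
    using assms unfolding edge_length_def sdist_def equiangular_def by (intro sum.cong refl) auto
  also have "\<dots> = (\<Sum>j\<le>d. real j) * arccos t" by (simp add: sum_distrib_right)
  also have "\<dots> = real d * (real d + 1) / 2 * arccos t"
    using double_gauss_sum[of d, where ?'a = real] by (simp add: atLeast0AtMost)
  finally show ?thesis .
qed

lemma shull_subset_shull:
  assumes "finite I" "finite J"
    and combination: "\<And>i. i \<in> I \<Longrightarrow> \<exists>\<mu>. (\<forall>j\<in>J. \<mu> j \<ge> 0) \<and> v i = (\<lambda>k. \<Sum>j\<in>J. \<mu> j * w j k)"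
  shows "shull d I v \<subseteq> shull d J w"
proof
  fix x assume "x \<in> shull d I v"
  then obtain l where x: "x \<in> sph d" "\<forall>i\<in>I. l i \<ge> 0" "x = (\<lambda>k. \<Sum>i\<in>I. l i * v i k)"
    unfolding shull_def by auto
  obtain \<mu> where \<mu>: "\<And>i j. i \<in> I \<Longrightarrow> j \<in> J \<Longrightarrow> \<mu> i j \<ge> 0"
    "\<And>i. i \<in> I \<Longrightarrow> v i = (\<lambda>k. \<Sum>j\<in>J. \<mu> i j * w j k)"
    using combination by metis
  have "x = (\<lambda>k. \<Sum>j\<in>J. (\<Sum>i\<in>I. l i * \<mu> i j) * w j k)"
  proof
    fix k
    have "x k = (\<Sum>i\<in>I. \<Sum>j\<in>J. l i * (\<mu> i j * w j k))"
      using x(3) \<mu>(2) by (simp add: sum_distrib_left)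
    also have "\<dots> = (\<Sum>j\<in>J. (\<Sum>i\<in>I. l i * \<mu> i j) * w j k)"
      by (subst sum.swap) (simp add: sum_distrib_right mult.assoc)
    finally show "x k = (\<Sum>j\<in>J. (\<Sum>i\<in>I. l i * \<mu> i j) * w j k)" .
  qed
  moreover have "\<forall>j\<in>J. (\<Sum>i\<in>I. l i * \<mu> i j) \<ge> 0"
    using x(2) \<mu>(1) by (simp add: sum_nonneg)
  ultimately show "x \<in> shull d J w"
    using x(1) unfolding shull_def by (intro CollectI conjI exI[of _ "\<lambda>j. \<Sum>i\<in>I. l i * \<mu> i j"]) auto
qed

definition cluster_norm :: "real \<Rightarrow> real \<Rightarrow> real" where
  "cluster_norm t \<alpha> = sqrt (1 - 2 * \<alpha> * t + \<alpha>^2)"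

text \<open>Keep \<open>v\<^sub>0\<close> and replace every other vertex by the unit vector in the direction of
  \<open>v\<^sub>i - \<alpha> v\<^sub>0\<close>. For large \<open>\<alpha>\<close> these crowd around \<open>-v\<^sub>0\<close>, so all edges avoiding \<open>v\<^sub>0\<close>
  become short, while \<open>v\<^sub>i = N w\<^sub>i + \<alpha> w\<^sub>0\<close> shows that the new simplex contains the old one.\<close>
definition cluster :: "(nat \<Rightarrow> nat \<Rightarrow> real) \<Rightarrow> real \<Rightarrow> real \<Rightarrow> nat \<Rightarrow> nat \<Rightarrow> real" where
  "cluster v t \<alpha> i = (if i = 0 then v 0
     else (\<lambda>k. (1 / cluster_norm t \<alpha>) * v i k + (- \<alpha> / cluster_norm t \<alpha>) * v 0 k))"

lemma cluster_norm_bounds: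
  assumes "t \<le> 0" "\<alpha> \<ge> 0"
  shows "cluster_norm t \<alpha> > 0" "(cluster_norm t \<alpha>)^2 = 1 - 2 * \<alpha> * t + \<alpha>^2"
    "(cluster_norm t \<alpha>)^2 \<ge> 1 + \<alpha>^2"
proof -
  have "1 - 2 * \<alpha> * t + \<alpha>^2 \<ge> 1 + \<alpha>^2" using assms mult_nonneg_nonpos[of \<alpha> t] by simp
  moreover have "1 + \<alpha>^2 > 0" by (simp add: add_pos_nonneg)
  ultimately show "cluster_norm t \<alpha> > 0" "(cluster_norm t \<alpha>)^2 = 1 - 2 * \<alpha> * t + \<alpha>^2"
    "(cluster_norm t \<alpha>)^2 \<ge> 1 + \<alpha>^2" unfolding cluster_norm_def by auto
qed

lemma cluster_nonzero:
  "i \<noteq> 0 \<Longrightarrow> cluster v t \<alpha> i = (\<lambda>k. (1 / cluster_norm t \<alpha>) * v i k + (- \<alpha> / cluster_norm t \<alpha>) * v 0 k)"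
  by (simp add: cluster_def)

lemma ipr_cluster_nonzero:
  assumes t: "equiangular d v t" "t \<le> 0" and \<alpha>: "\<alpha> \<ge> 0"
    and ij: "i \<noteq> 0" "j \<noteq> 0" "i \<le> d" "j \<le> d"
  shows "ipr d (cluster v t \<alpha> i) (cluster v t \<alpha> j) = (if i = j then 1 else 1 - (1 - t) / (cluster_norm t \<alpha>)^2)"
proof -
  let ?N = "cluster_norm t \<alpha>"
  have N: "?N > 0" using cluster_norm_bounds[OF t(2) \<alpha>] by simp
  have G: "ipr d (v i) (v j) = (if i = j then 1 else t)" "ipr d (v 0) (v j) = t"
    "ipr d (v i) (v 0) = t" "ipr d (v 0) (v 0) = 1"
    using t(1) ij unfolding equiangular_def by auto
  have "ipr d (cluster v t \<alpha> i) (cluster v t \<alpha> j)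
      = (1/?N) * ((1/?N) * ipr d (v i) (v j) + (-\<alpha>/?N) * ipr d (v i) (v 0))
        + (-\<alpha>/?N) * ((1/?N) * ipr d (v 0) (v j) + (-\<alpha>/?N) * ipr d (v 0) (v 0))"
    unfolding cluster_nonzero[OF ij(1)] cluster_nonzero[OF ij(2)]
    by (simp only: ipr_linear_left ipr_linear_right)
  also have "\<dots> = ((if i = j then 1 else t) - 2 * \<alpha> * t + \<alpha>^2) / ?N^2"
    using N unfolding G by (simp add: field_simps power2_eq_square)
  also have "\<dots> = (if i = j then 1 else 1 - (1 - t) / ?N^2)"
  proof -
    obtain D where D: "D = ?N^2" "D = 1 - 2 * \<alpha> * t + \<alpha>^2" "D > 0"
      using cluster_norm_bounds[OF t(2) \<alpha>] by (metis add_pos_nonneg zero_less_one zero_le_power2 order.strict_trans2)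
    have "(if i = j then 1 else t) - 2 * \<alpha> * t + \<alpha>^2 = D - (if i = j then 0 else 1 - t)"
      using D(2) by simp
    then show ?thesis unfolding D(1)[symmetric] using D(3) by (simp add: diff_divide_distrib)
  qed
  finally show ?thesis .
qed

lemma ipr_cluster_self:
  assumes "equiangular d v t" "t \<le> 0" "\<alpha> \<ge> 0" "i \<le> d"
  shows "ipr d (cluster v t \<alpha> i) (cluster v t \<alpha> i) = 1"
  using ipr_cluster_nonzero[OF assms(1-3) _ _ assms(4,4)] assms(1,4)
  unfolding equiangular_def by (cases "i = 0") (auto simp: cluster_def)

lemma sum_cluster:
  "(\<Sum>i\<le>d. a i * cluster v t \<alpha> i k) = (\<Sum>i\<le>d. (if i = 0
      then a 0 - \<alpha> / cluster_norm t \<alpha> * (\<Sum>j\<le>d. if j = 0 then 0 else a j)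
      else a i / cluster_norm t \<alpha>) * v i k)"
proof -
  let ?N = "cluster_norm t \<alpha>" and ?A = "\<Sum>j\<le>d. if j = 0 then 0 else a j"
  have "(\<Sum>i\<le>d. a i * cluster v t \<alpha> i k)
      = (\<Sum>i\<le>d. (if i = 0 then a 0 else a i / ?N) * v i k + (if i = 0 then 0 else a i) * (-\<alpha>/?N * v 0 k))"
    by (rule sum.cong) (auto simp: cluster_def algebra_simps)
  also have "\<dots> = (\<Sum>i\<le>d. (if i = 0 then a 0 else a i / ?N) * v i k) + ?A * (-\<alpha>/?N * v 0 k)"
    by (simp only: sum.distrib sum_distrib_right)
  also have "\<dots> = (\<Sum>i\<le>d. (if i = 0 then a 0 else a i / ?N) * v i k + (if i = 0 then - \<alpha>/?N * ?A * v 0 k else 0))"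
    by (simp add: sum.distrib)
  also have "\<dots> = (\<Sum>i\<le>d. (if i = 0 then a 0 - \<alpha>/?N * ?A else a i / ?N) * v i k)"
    by (rule sum.cong) (auto simp: algebra_simps)
  finally show ?thesis .
qed

lemma cluster_independent:
  assumes v: "is_ssimplex d v" and N: "cluster_norm t \<alpha> > 0"
    and a: "\<And>k. k \<le> d \<Longrightarrow> (\<Sum>i\<le>d. a i * cluster v t \<alpha> i k) = 0" and i: "i \<le> d"
  shows "a i = 0"
proof -
  define b where "b = (\<lambda>i. if i = 0
      then a 0 - \<alpha> / cluster_norm t \<alpha> * (\<Sum>j\<le>d. if j = 0 then 0 else a j)
      else a i / cluster_norm t \<alpha>)"
  have b0: "b i = 0" if "i \<le> d" for i
    by (rule ssimplex_independent[OF v _ that, where a = b]) (use a in \<open>simp add: sum_cluster b_def\<close>)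
  then have nonzero: "a j = 0" if "j \<le> d" "j \<noteq> 0" for j
    using N that b0[of j] by (simp add: b_def)
  then have "(\<Sum>j\<le>d. if j = 0 then 0 else a j) = 0" by (intro sum.neutral) auto
  then show ?thesis using b0[of 0] nonzero i by (cases "i = 0") (auto simp: b_def)
qed

lemma cluster_hemisphere:
  assumes v: "is_ssimplex d v" and t: "equiangular d v t" "t < 0" "1 + real d * t > 0"
    and \<alpha>: "\<alpha> > 0"
  shows "\<exists>u\<in>vecR d. \<forall>i\<le>d. ipr d u (cluster v t \<alpha> i) > 0"
proof
  let ?N = "cluster_norm t \<alpha>"
  have N: "?N > 0" using cluster_norm_bounds[OF _ less_imp_le[OF \<alpha>]] t(2) by simp
  define u where "u = (\<lambda>k. (-1) * v 0 k + ((1 + 1/\<alpha>) / (1 + real d * t)) * vertex_sum d v k)"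
  have uv: "ipr d u (v j) = (if j = 0 then 1/\<alpha> else 1/\<alpha> + 1 - t)" if "j \<le> d" for j
  proof -
    have "ipr d (v 0) (v j) = (if j = 0 then 1 else t)" using t(1) that unfolding equiangular_def by auto
    then show ?thesis unfolding u_def ipr_linear_left equiangular_ipr_vertex_sum[OF t(1) that]
      using t(3) by auto
  qed
  show "\<forall>i\<le>d. ipr d u (cluster v t \<alpha> i) > 0"
  proof (intro allI impI)
    fix i assume i: "i \<le> d"
    show "ipr d u (cluster v t \<alpha> i) > 0"
    proof (cases "i = 0")
      case True then show ?thesis using uv[of 0] \<alpha> by (simp add: cluster_def)
    next
      case False
      have "ipr d u (cluster v t \<alpha> i) = (1/?N) * ipr d u (v i) + (-\<alpha>/?N) * ipr d u (v 0)"
        unfolding cluster_nonzero[OF False] by (rule ipr_linear_right)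
      also have "\<dots> = (1/?N) * (1/\<alpha> + 1 - t) + (-\<alpha>/?N) * (1/\<alpha>)"
        using uv[OF i] uv[of 0] False by simp
      also have "\<dots> = (1/\<alpha> - t) / ?N"
        using \<alpha> N by (simp add: field_simps)
      moreover have "1/\<alpha> - t > 0" using divide_pos_pos[OF zero_less_one \<alpha>] t(2) by linarith
      ultimately show ?thesis using N by simp
    qed
  qed
  show "u \<in> vecR d"
    using ssimplex_vertex_vanishes[OF v] unfolding u_def vertex_sum_def vecR_def by simp
qed

lemma cluster_ssimplex:
  assumes v: "is_ssimplex d v" and t: "equiangular d v t" "t < 0" "1 + real d * t > 0"
    and \<alpha>: "\<alpha> > 0"
  shows "is_ssimplex d (cluster v t \<alpha>)"
proof -
  have "cluster v t \<alpha> i \<in> vecR d" if "i \<le> d" for i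
    using that ssimplex_vertex_vanishes[OF v] unfolding cluster_def vecR_def by auto
  moreover have "ipr d (cluster v t \<alpha> i) (cluster v t \<alpha> i) = 1" if "i \<le> d" for i
    using ipr_cluster_self[OF t(1) _ _ that] t(2) \<alpha> by simp
  moreover have "cluster_norm t \<alpha> > 0" using cluster_norm_bounds(1) t(2) \<alpha> by simp
  ultimately show ?thesis
    unfolding is_ssimplex_def sph_def
    using cluster_hemisphere[OF assms] cluster_independent[OF v] by blast
qed

lemma ssimplex_set_subset_cluster:
  assumes t: "t \<le> 0" and \<alpha>: "\<alpha> \<ge> 0"
  shows "ssimplex_set d v \<subseteq> ssimplex_set d (cluster v t \<alpha>)"
  unfolding ssimplex_set_def
proof (rule shull_subset_shull)
  let ?N = "cluster_norm t \<alpha>"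
  have N: "?N > 0" using cluster_norm_bounds[OF t \<alpha>] by simp
  fix i assume "i \<in> {..d}"
  show "\<exists>\<mu>. (\<forall>j\<in>{..d}. \<mu> j \<ge> 0) \<and> v i = (\<lambda>k. \<Sum>j\<le>d. \<mu> j * cluster v t \<alpha> j k)"
  proof (cases "i = 0")
    case True
    have "v 0 k = (\<Sum>j\<le>d. (if j = 0 then 1 else 0) * cluster v t \<alpha> j k)" for k
    proof -
      have "(\<Sum>j\<le>d. (if j = 0 then 1 else 0) * cluster v t \<alpha> j k) = (\<Sum>j\<le>d. if j = 0 then v 0 k else 0)"
        by (intro sum.cong) (auto simp: cluster_def)
      then show ?thesis by simp
    qed
    then show ?thesis using True by (intro exI[of _ "\<lambda>j. if j = 0 then 1 else 0"]) auto
  next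
    case False
    have "v i k = (\<Sum>j\<le>d. (if j = i then ?N else if j = 0 then \<alpha> else 0) * cluster v t \<alpha> j k)" for k
    proof -
      have "(\<Sum>j\<le>d. (if j = i then ?N else if j = 0 then \<alpha> else 0) * cluster v t \<alpha> j k)
          = (\<Sum>j\<le>d. (if j = i then ?N * cluster v t \<alpha> i k else 0) + (if j = 0 then \<alpha> * v 0 k else 0))"
        using False by (intro sum.cong) (auto simp: cluster_def)
      also have "\<dots> = ?N * cluster v t \<alpha> i k + \<alpha> * v 0 k"
        using \<open>i \<in> {..d}\<close> by (simp add: sum.distrib)
      also have "\<dots> = v i k" using N False by (simp add: cluster_def field_simps)
      finally show ?thesis by simp
    qed
    then show ?thesis using N \<alpha> by (intro exI[of _ "\<lambda>j. if j = i then ?N else if j = 0 then \<alpha> else 0"]) auto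
  qed
qed simp_all

text \<open>Edges at \<open>w\<^sub>0\<close> are bounded by \<open>\<pi>\<close>; the others have cosine
  \<open>1 - (1 - t)/N\<^sup>2 \<ge> 1 - 2/(1 + \<alpha>\<^sup>2) \<ge> cos \<epsilon>\<close>.\<close>
lemma cluster_edge_length_le:
  assumes t: "equiangular d v t" "-1 < t" "t < 0"
    and \<epsilon>: "0 < \<epsilon>" "\<epsilon> \<le> pi/2" and \<alpha>: "\<alpha> \<ge> 1" "(1 - cos \<epsilon>) * \<alpha> \<ge> 2"
  shows "edge_length d (cluster v t \<alpha>) \<le> real d * (pi + real d * \<epsilon>)"
proof -
  let ?w = "cluster v t \<alpha>" and ?N = "cluster_norm t \<alpha>"
  have unit: "ipr d (?w i) (?w i) = 1" if "i \<le> d" for i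
    using ipr_cluster_self[OF t(1) _ _ that] t(3) \<alpha>(1) by simp
  have edge_le_pi: "sdist d (?w i) (?w j) \<le> pi" if "i \<le> d" "j \<le> d" for i j
    unfolding sdist_def using ipr_unit_bounds[OF unit[OF that(1)] unit[OF that(2)]]
    by (intro arccos_ubound) (simp add: abs_le_iff)
  have short_edge: "sdist d (?w i) (?w j) \<le> \<epsilon>"
    if "i \<noteq> 0" "j \<noteq> 0" "i \<noteq> j" "i \<le> d" "j \<le> d" for i j
  proof -
    have y: "ipr d (?w i) (?w j) = 1 - (1 - t) / ?N^2"
      using ipr_cluster_nonzero[OF t(1) _ _ that(1,2,4,5)] that(3) t(3) \<alpha>(1) by simp
    have N: "?N^2 \<ge> 1 + \<alpha>^2" using cluster_norm_bounds(3)[of t \<alpha>] t(3) \<alpha>(1) by simp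
    have "1 - t \<le> 2 * 1" using t(2) by simp
    also have "\<dots> \<le> (1 - cos \<epsilon>) * \<alpha> * \<alpha>" using \<alpha> by (intro mult_mono) auto
    also have "\<dots> \<le> (1 - cos \<epsilon>) * ?N^2"
      using N cos_le_one[of \<epsilon>] unfolding mult.assoc power2_eq_square[symmetric]
      by (intro mult_left_mono) auto
    finally have "1 - t \<le> (1 - cos \<epsilon>) * ?N^2" .
    moreover have "?N^2 > 0" using cluster_norm_bounds(1)[of t \<alpha>] t(3) \<alpha>(1) by simp
    ultimately have "(1 - t) / ?N^2 \<le> 1 - cos \<epsilon>" by (simp add: divide_le_eq)
    then have "cos \<epsilon> \<le> ipr d (?w i) (?w j)" unfolding y by linarith
    moreover have "ipr d (?w i) (?w j) \<le> 1"
      using ipr_unit_bounds(2)[OF unit[OF that(4)] unit[OF that(5)]] .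
    ultimately have "arccos (ipr d (?w i) (?w j)) \<le> arccos (cos \<epsilon>)"
      using \<epsilon> cos_ge_zero[of \<epsilon>] by (intro arccos_le_arccos) auto
    also have "\<dots> = \<epsilon>" using \<epsilon> by (intro arccos_cos) auto
    finally show ?thesis unfolding sdist_def .
  qed
  have "(\<Sum>i<j. sdist d (?w i) (?w j)) \<le> pi + real d * \<epsilon>" if "j \<le> d" "j \<noteq> 0" for j
  proof -
    have "(\<Sum>i<j. sdist d (?w i) (?w j)) \<le> (\<Sum>i<j. (if i = 0 then pi else 0) + \<epsilon>)"
    proof (rule sum_mono)
      fix i assume "i \<in> {..<j}"
      then show "sdist d (?w i) (?w j) \<le> (if i = 0 then pi else 0) + \<epsilon>"
        using edge_le_pi[of i j] short_edge[of i j] that \<epsilon>(1) by (cases "i = 0") auto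
    qed
    also have "\<dots> = pi + real j * \<epsilon>" using that(2) by (simp add: sum.distrib)
    also have "\<dots> \<le> pi + real d * \<epsilon>" using that(1) \<epsilon>(1) by (simp add: mult_right_mono)
    finally show ?thesis .
  qed
  then have "edge_length d ?w \<le> (\<Sum>j\<le>d. if j = 0 then 0 else pi + real d * \<epsilon>)"
    unfolding edge_length_def by (intro sum_mono) auto
  also have "\<dots> = real d * (pi + real d * \<epsilon>)" using sum_if_eq_atMost[of 0 d 0] by simp
  finally show ?thesis .
qed

lemma obtuse_equiangular_ssimplex_shortened:
  assumes d: "d \<ge> 3" and v: "is_ssimplex d v" and t: "equiangular d v t" "t < 0"
  shows "\<exists>w. is_ssimplex d w \<and> ssimplex_set d v \<subseteq> ssimplex_set d w \<and> edge_length d w < edge_length d v"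
proof -
  have pos: "1 + real d * t > 0" using equiangular_ssimplex_bounds[OF _ v t(1)] d by simp
  have "real d * t \<le> t" using t(2) d by (simp add: mult_le_cancel_right1)
  then have t_gt: "t > -1" using pos by linarith
  define M where "M = (real d + 1) * arccos t / 2 - pi"
  have "arccos t > pi/2" using arccos_less_arccos[of t 0] t_gt t(2) by simp
  moreover have "(real d + 1) * arccos t \<ge> 4 * arccos t"
    using d arccos_lbound[of t] t_gt t(2) by (intro mult_right_mono) auto
  ultimately have M: "M > 0" unfolding M_def by linarith
  have length_v: "edge_length d v = real d * pi + real d * M"
    unfolding equiangular_edge_length[OF t(1)] M_def by (simp add: algebra_simps)
  define \<epsilon> where "\<epsilon> = min (M / (2 * real d)) (pi/2)"
  have \<epsilon>: "0 < \<epsilon>" "\<epsilon> \<le> pi/2" "\<epsilon> \<le> M / (2 * real d)" using M d by (auto simp: \<epsilon>_def)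
  have "cos \<epsilon> < cos 0" using \<epsilon> by (intro cos_monotone_0_pi) auto
  then have cos_\<epsilon>: "cos \<epsilon> < 1" by simp
  define \<alpha> where "\<alpha> = 2 / (1 - cos \<epsilon>) + 1"
  have "(1 - cos \<epsilon>) * \<alpha> = 2 + (1 - cos \<epsilon>)" using cos_\<epsilon> unfolding \<alpha>_def by (simp add: field_simps)
  then have \<alpha>: "\<alpha> \<ge> 1" "(1 - cos \<epsilon>) * \<alpha> \<ge> 2" using cos_\<epsilon> unfolding \<alpha>_def by simp_all
  let ?w = "cluster v t \<alpha>"
  have "edge_length d ?w \<le> real d * (pi + real d * \<epsilon>)"
    by (rule cluster_edge_length_le[OF t(1) t_gt t(2) \<epsilon>(1,2) \<alpha>])
  also have "\<dots> \<le> real d * (pi + real d * (M / (2 * real d)))"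
    using \<epsilon>(3) by (intro mult_left_mono add_left_mono) auto
  also have "\<dots> < edge_length d v" using length_v M d by (simp add: field_simps)
  finally have "edge_length d ?w < edge_length d v" .
  moreover have "is_ssimplex d ?w" using cluster_ssimplex[OF v t pos] \<alpha>(1) by simp
  moreover have "ssimplex_set d v \<subseteq> ssimplex_set d ?w"
    using ssimplex_set_subset_cluster[of t \<alpha> d v] t(2) \<alpha>(1) by simp
  ultimately show ?thesis by blast
qed

lemma regular_ssimplex_containing_ball_shortened:
  assumes d: "d \<ge> 3" and r: "0 < r" "r < pi/2" and big: "(real d + 1) * (sin r)^2 > 1"
    and c: "c \<in> sph d" and v: "is_ssimplex d v" "is_regular d v" and sub: "sball d c r \<subseteq> ssimplex_set d v"
  shows "\<exists>w. is_ssimplex d w \<and> sball d c r \<subseteq> ssimplex_set d w \<and> edge_length d w < edge_length d v"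
proof -
  let ?t = "ipr d (v 0) (v 1)"
  have t: "equiangular d v ?t" using regular_ssimplex_equiangular[OF _ v] d by simp
  then have "?t < 0"
    using equiangular_ssimplex_containing_ball_obtuse[OF _ v(1) t c r sub big] d by simp
  then show ?thesis using obtuse_equiangular_ssimplex_shortened[OF d v(1) t] sub by blast
qed

lemma large_radius_sin_bound:
  assumes "d \<ge> 3" "pi/6 < r" "r < pi/2"
  shows "(real d + 1) * (sin r)^2 > 1"
proof -
  have "sin (pi/6) < sin r" using assms by (intro sin_monotone_2pi) auto
  then have "(1/2)^2 < (sin r)^2" by (intro power_strict_mono) (auto simp: sin_30)
  moreover have "real d + 1 \<ge> 4" using assms(1) by simp
  ultimately have "4 * (1/2)^2 < (real d + 1) * (sin r)^2" by (intro mult_le_less_imp_less) auto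
  then show ?thesis by (simp add: power2_eq_square)
qed

lemma large_dimension_sin_bound:
  assumes "0 < r" "r < pi/2" "real d \<ge> 1 / (sin r)^2"
  shows "(real d + 1) * (sin r)^2 > 1"
proof -
  have "sin r > 0" using assms by (intro sin_gt_zero) auto
  then have "(sin r)^2 > 0" by simp
  moreover from this have "real d * (sin r)^2 \<ge> 1" using assms(3) by (simp add: divide_le_eq)
  ultimately show ?thesis unfolding distrib_right by linarith
qed

theorem mainTheorem11:
  shows
  "(\<forall>d\<ge>3. \<exists>r0<pi/2. \<forall>r. r0 < r \<and> 0 < r \<and> r < pi/2 \<longrightarrow>
      (\<forall>c \<in> sph d. \<forall>vreg. is_ssimplex d vreg \<and> is_regular d vreg \<and> circumscribed d vreg (sball d c r)
         \<longrightarrow> (\<exists>v. is_ssimplex d v \<and> sball d c r \<subseteq> ssimplex_set d v \<and>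
                  edge_length d v < edge_length d vreg)))
   \<and>
   (\<forall>r. 0 < r \<and> r < pi/2 \<longrightarrow> (\<exists>D. \<forall>d\<ge>max 2 D.
      (\<forall>c \<in> sph d. \<forall>vreg. is_ssimplex d vreg \<and> is_regular d vreg \<and> circumscribed d vreg (sball d c r)
         \<longrightarrow> (\<exists>v. is_ssimplex d v \<and> sball d c r \<subseteq> ssimplex_set d v \<and>
                  edge_length d v < edge_length d vreg))))"
proof (intro conjI allI impI)
  fix d :: nat assume d: "d \<ge> 3"
  show "\<exists>r0<pi/2. \<forall>r. r0 < r \<and> 0 < r \<and> r < pi/2 \<longrightarrow> (\<forall>c \<in> sph d. \<forall>vreg.
      is_ssimplex d vreg \<and> is_regular d vreg \<and> circumscribed d vreg (sball d c r) \<longrightarrow>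
      (\<exists>v. is_ssimplex d v \<and> sball d c r \<subseteq> ssimplex_set d v \<and> edge_length d v < edge_length d vreg))"
    using regular_ssimplex_containing_ball_shortened[OF d] large_radius_sin_bound[OF d]
    unfolding circumscribed_def by (intro exI[of _ "pi/6"]) auto
next
  fix r :: real assume r: "0 < r \<and> r < pi/2"
  show "\<exists>D. \<forall>d\<ge>max 2 D. \<forall>c \<in> sph d. \<forall>vreg.
      is_ssimplex d vreg \<and> is_regular d vreg \<and> circumscribed d vreg (sball d c r) \<longrightarrow>
      (\<exists>v. is_ssimplex d v \<and> sball d c r \<subseteq> ssimplex_set d v \<and> edge_length d v < edge_length d vreg)"
  proof (intro exI[of _ "nat \<lceil>1 / (sin r)^2\<rceil> + 3"] allI impI)
    fix d :: nat assume "d \<ge> max 2 (nat \<lceil>1 / (sin r)^2\<rceil> + 3)"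
    then have d: "d \<ge> 3" "real d \<ge> 1 / (sin r)^2" by linarith+
    show "\<forall>c \<in> sph d. \<forall>vreg. is_ssimplex d vreg \<and> is_regular d vreg \<and> circumscribed d vreg (sball d c r) \<longrightarrow>
      (\<exists>v. is_ssimplex d v \<and> sball d c r \<subseteq> ssimplex_set d v \<and> edge_length d v < edge_length d vreg)"
      using regular_ssimplex_containing_ball_shortened[OF d(1)] large_dimension_sin_bound[OF _ _ d(2)] r
      unfolding circumscribed_def by blast
  qed
qed

end
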